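(* If $n=5$ or $n$ is a positive integer divisible by $10$, then $d(L(n,2n-2)) = n^2 - \frac{8n}{5}$.
   Context: For positive integers $n,k$, let $\mathcal{L}_{n,k}$ be the set of $n\times n$ squares all of whose entries are colored with colors from a fixed set of $k$ colors $\{1,\dots,k\}$ such that any two entries in the same row, or in the same column, have different colors. A partial coloring of an $n\times n$ square assigns colors from $\{1,\dots,k\}$ to some of its entries; the remaining entries are called uncolored. A partial coloring extends to $L(n,k)$ if the uncolored entries can be colored so that the resulting fully colored square lies in $\mathcal{L}_{n,k}$ (keeping the given colors), and it uniquely extends to $L(n,k)$ if there is exactly one such way. A defining set of the $k$-coloring of an $n\times n$ square is the set of colored entries of a partial coloring that uniquely extends to $L(n,k)$; the defining number $d(L(n,k))$ is the minimum cardinality of such a defining set. *)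

theory Defs
  imports Complex_Main
begin

definition cells :: "nat \<Rightarrow> (nat \<times> nat) set" where
  "cells n = {0..<n} \<times> {0..<n}"

definition partial_coloring :: "nat \<Rightarrow> nat \<Rightarrow> (nat \<times> nat \<rightharpoonup> nat) \<Rightarrow> bool" where
  "partial_coloring n k p \<longleftrightarrow> dom p \<subseteq> cells n \<and> ran p \<subseteq> {1..k}"

definition Lset :: "nat \<Rightarrow> nat \<Rightarrow> (nat \<times> nat \<rightharpoonup> nat) set" where
  "Lset n k = {c. dom c = cells n \<and> ran c \<subseteq> {1..k} \<and>
     (\<forall>i<n. \<forall>j<n. \<forall>j'<n. j \<noteq> j' \<longrightarrow> c (i,j) \<noteq> c (i,j')) \<and>
     (\<forall>j<n. \<forall>i<n. \<forall>i'<n. i \<noteq> i' \<longrightarrow> c (i,j) \<noteq> c (i',j))}"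

definition extends_to :: "nat \<Rightarrow> nat \<Rightarrow> (nat \<times> nat \<rightharpoonup> nat) \<Rightarrow> bool" where
  "extends_to n k p \<longleftrightarrow> (\<exists>c \<in> Lset n k. p \<subseteq>\<^sub>m c)"

definition uniquely_extends :: "nat \<Rightarrow> nat \<Rightarrow> (nat \<times> nat \<rightharpoonup> nat) \<Rightarrow> bool" where
  "uniquely_extends n k p \<longleftrightarrow> (\<exists>!c. c \<in> Lset n k \<and> p \<subseteq>\<^sub>m c)"

definition defining_number :: "nat \<Rightarrow> nat \<Rightarrow> nat" where
  "defining_number n k = (LEAST m. \<exists>p. partial_coloring n k p \<and> uniquely_extends n k p \<and> card (dom p) = m)"

end

(* Let c be the unique completion of a defining set and U its set of uncoloured
   cells. Recolouring a single cell of U shows that its row and column together contain all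
   2n - 2 colours, so they share exactly two: the colour of the cell and its twin. Swapping or
   rotating colours among uncoloured cells in a common line or rectangle constrains the twins,
   and a case analysis shows that the bipartite graph of U (rows against columns) contains none
   of K(1,4), C4, P6, the spiders S(3,1,1) and S(2,2,1) and the double star with two adjacent
   centres of degree 3. A discharging argument (charge 5 on every edge, at most 4 received by
   every vertex) then gives 5 |U| <= 8 n.
   Conversely, for n = 5 m with m = 1 or m even, colour the diagonal 5 x 5 blocks by a fixed
   array on 8 colours and the off-diagonal blocks by cyclic Latin squares on disjoint sets of
   5 further colours, assigned by a round-robin schedule of K(m). Erasing 8 suitable cells of
   every diagonal block leaves a defining set with exactly 8 n / 5 uncoloured cells. *)

theory Submission
  imports Defs "HOL-Number_Theory.Cong"
begin

section \<open>Colourings of the square\<close>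

lemma card_cells: "card (cells n) = n * n"
  by (simp add: cells_def card_cartesian_product)

lemma Lset_value:
  assumes "c \<in> Lset n k" "i < n" "j < n"
  shows "\<exists>v \<in> {1..k}. c (i, j) = Some v"
proof -
  have "(i, j) \<in> dom c" using assms unfolding Lset_def cells_def by auto
  then obtain v where v: "c (i, j) = Some v" by auto
  then have "v \<in> ran c" by (auto simp: ran_def)
  then show ?thesis using v assms(1) unfolding Lset_def by auto
qed

lemma Lset_None: "c \<in> Lset n k \<Longrightarrow> z \<notin> cells n \<Longrightarrow> c z = None"
  unfolding Lset_def by auto

lemma Lset_row_distinct:
  "c \<in> Lset n k \<Longrightarrow> i < n \<Longrightarrow> j < n \<Longrightarrow> j' < n \<Longrightarrow> j \<noteq> j' \<Longrightarrow> c (i, j) \<noteq> c (i, j')"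
  unfolding Lset_def by blast

lemma Lset_col_distinct:
  "c \<in> Lset n k \<Longrightarrow> i < n \<Longrightarrow> i' < n \<Longrightarrow> j < n \<Longrightarrow> i \<noteq> i' \<Longrightarrow> c (i, j) \<noteq> c (i', j)"
  unfolding Lset_def by blast

lemma LsetI:
  assumes "\<And>i j. i < n \<Longrightarrow> j < n \<Longrightarrow> \<exists>v \<in> {1..k}. c (i, j) = Some v"
    and "\<And>z. z \<notin> cells n \<Longrightarrow> c z = None"
    and "\<And>i j j'. i < n \<Longrightarrow> j < n \<Longrightarrow> j' < n \<Longrightarrow> j \<noteq> j' \<Longrightarrow> c (i, j) \<noteq> c (i, j')"
    and "\<And>i i' j. i < n \<Longrightarrow> i' < n \<Longrightarrow> j < n \<Longrightarrow> i \<noteq> i' \<Longrightarrow> c (i, j) \<noteq> c (i', j)"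
  shows "c \<in> Lset n k"
proof -
  have "dom c = cells n"
  proof
    show "dom c \<subseteq> cells n" using assms(2) by (metis domIff subsetI)
    show "cells n \<subseteq> dom c" using assms(1) by (fastforce simp: cells_def)
  qed
  moreover have "ran c \<subseteq> {1..k}"
  proof
    fix v assume "v \<in> ran c"
    then obtain z where z: "c z = Some v" by (auto simp: ran_def)
    then have "z \<in> cells n" using assms(2) by fastforce
    then obtain i j where "z = (i, j)" "i < n" "j < n" by (auto simp: cells_def)
    then show "v \<in> {1..k}" using assms(1)[of i j] z by auto
  qed
  ultimately show ?thesis unfolding Lset_def using assms(3,4) by blast
qed

lemma Lset_transpose:
  assumes "c \<in> Lset n k"
  shows "c \<circ> prod.swap \<in> Lset n k"
proof (rule LsetI)
  show "\<exists>v \<in> {1..k}. (c \<circ> prod.swap) (i, j) = Some v" if "i < n" "j < n" for i j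
    using Lset_value[OF assms that(2,1)] by simp
  show "(c \<circ> prod.swap) z = None" if "z \<notin> cells n" for z
  proof -
    have "prod.swap z \<notin> cells n" using that by (cases z) (auto simp: cells_def)
    then show ?thesis using Lset_None[OF assms] by simp
  qed
qed (use Lset_col_distinct[OF assms] Lset_row_distinct[OF assms] in simp_all)

locale unique_completion =
  fixes n k :: nat and c :: "nat \<times> nat \<rightharpoonup> nat" and U :: "(nat \<times> nat) set"
  assumes complete: "c \<in> Lset n k"
    and uncoloured_cells: "U \<subseteq> cells n"
    and unique: "\<And>c'. c' \<in> Lset n k \<Longrightarrow> (\<And>z. z \<notin> U \<Longrightarrow> c' z = c z) \<Longrightarrow> c' = c"
begin

definition colour :: "nat \<Rightarrow> nat \<Rightarrow> nat" where
  "colour i j = the (c (i, j))"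

definition row_colours :: "nat \<Rightarrow> nat set" where
  "row_colours i = (\<lambda>j. colour i j) ` {..<n}"

definition col_colours :: "nat \<Rightarrow> nat set" where
  "col_colours j = (\<lambda>i. colour i j) ` {..<n}"

lemma transpose: "unique_completion n k (c \<circ> prod.swap) (U\<inverse>)"
proof
  show "c \<circ> prod.swap \<in> Lset n k" using complete by (rule Lset_transpose)
  show "U\<inverse> \<subseteq> cells n" using uncoloured_cells by (auto simp: cells_def)
  fix c' assume c': "c' \<in> Lset n k" "\<And>z. z \<notin> U\<inverse> \<Longrightarrow> c' z = (c \<circ> prod.swap) z"
  have "c' \<circ> prod.swap = c"
  proof (rule unique)
    show "c' \<circ> prod.swap \<in> Lset n k" using c'(1) by (rule Lset_transpose)
    show "(c' \<circ> prod.swap) z = c z" if "z \<notin> U" for z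
      using c'(2)[of "prod.swap z"] that by (cases z) simp
  qed
  then show "c' = c \<circ> prod.swap" by (auto simp: fun_eq_iff)
qed

lemma uncoloured_less: "(i, j) \<in> U \<Longrightarrow> i < n \<and> j < n"
  using uncoloured_cells by (auto simp: cells_def)

lemma c_colour: "i < n \<Longrightarrow> j < n \<Longrightarrow> c (i, j) = Some (colour i j)"
  using Lset_value[OF complete] by (fastforce simp: colour_def)

lemma colour_range: "i < n \<Longrightarrow> j < n \<Longrightarrow> colour i j \<in> {1..k}"
  using Lset_value[OF complete] by (fastforce simp: colour_def)

lemma colour_row_eq_iff:
  "i < n \<Longrightarrow> j < n \<Longrightarrow> j' < n \<Longrightarrow> colour i j = colour i j' \<longleftrightarrow> j = j'"
  using Lset_row_distinct[OF complete, of i j j'] c_colour[of i j] c_colour[of i j'] by auto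

lemma colour_col_eq_iff:
  "i < n \<Longrightarrow> i' < n \<Longrightarrow> j < n \<Longrightarrow> colour i j = colour i' j \<longleftrightarrow> i = i'"
  using Lset_col_distinct[OF complete, of i i' j] c_colour[of i j] c_colour[of i' j] by auto

lemma colour_in_row_colours: "j < n \<Longrightarrow> colour i j \<in> row_colours i"
  by (simp add: row_colours_def)

lemma colour_in_col_colours: "i < n \<Longrightarrow> colour i j \<in> col_colours j"
  by (simp add: col_colours_def)

lemma card_row_colours: "i < n \<Longrightarrow> card (row_colours i) = n"
  unfolding row_colours_def by (subst card_image) (auto intro!: inj_onI simp: colour_row_eq_iff)

lemma card_col_colours: "j < n \<Longrightarrow> card (col_colours j) = n"
  unfolding col_colours_def by (subst card_image) (auto intro!: inj_onI simp: colour_col_eq_iff)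

lemma row_colours_range: "i < n \<Longrightarrow> row_colours i \<subseteq> {1..k}"
  using colour_range by (auto simp: row_colours_def)

lemma col_colours_range: "j < n \<Longrightarrow> col_colours j \<subseteq> {1..k}"
  using colour_range by (auto simp: col_colours_def)

lemma recolouring_eq_colour:
  assumes D: "D \<subseteq> U" and w: "\<And>z. z \<in> D \<Longrightarrow> w z \<in> {1..k}"
    and row_inside: "\<And>i j j'. (i, j) \<in> D \<Longrightarrow> (i, j') \<in> D \<Longrightarrow> j \<noteq> j' \<Longrightarrow> w (i, j) \<noteq> w (i, j')"
    and col_inside: "\<And>i i' j. (i, j) \<in> D \<Longrightarrow> (i', j) \<in> D \<Longrightarrow> i \<noteq> i' \<Longrightarrow> w (i, j) \<noteq> w (i', j)"
    and row_outside: "\<And>i j j'. (i, j) \<in> D \<Longrightarrow> (i, j') \<notin> D \<Longrightarrow> j' < n \<Longrightarrow> w (i, j) \<noteq> colour i j'"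
    and col_outside: "\<And>i i' j. (i, j) \<in> D \<Longrightarrow> (i', j) \<notin> D \<Longrightarrow> i' < n \<Longrightarrow> w (i, j) \<noteq> colour i' j"
    and ij: "(i, j) \<in> D"
  shows "w (i, j) = colour i j"
proof -
  define c' where "c' = (\<lambda>z. if z \<in> D then Some (w z) else c z)"
  have D_less: "a < n" "b < n" if "(a, b) \<in> D" for a b
    using D that uncoloured_less by auto
  have "c' \<in> Lset n k"
  proof (rule LsetI)
    show "\<exists>v \<in> {1..k}. c' (a, b) = Some v" if "a < n" "b < n" for a b
      using w[of "(a, b)"] colour_range[OF that] c_colour[OF that] by (simp add: c'_def)
    show "c' z = None" if "z \<notin> cells n" for z
      using that Lset_None[OF complete that] D_less by (cases z) (auto simp: c'_def cells_def)
    show "c' (a, b) \<noteq> c' (a, b')" if "a < n" "b < n" "b' < n" "b \<noteq> b'" for a b b'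
      using row_inside[of a b b'] row_outside[of a b b'] row_outside[of a b' b] that
        Lset_row_distinct[OF complete that] c_colour[of a b] c_colour[of a b']
      by (auto simp: c'_def)
    show "c' (a, b) \<noteq> c' (a', b)" if "a < n" "a' < n" "b < n" "a \<noteq> a'" for a a' b
      using col_inside[of a b a'] col_outside[of a b a'] col_outside[of a' b a] that
        Lset_col_distinct[OF complete that] c_colour[of a b] c_colour[of a' b]
      by (auto simp: c'_def)
  qed
  moreover have "c' z = c z" if "z \<notin> U" for z
    using that D by (auto simp: c'_def)
  ultimately have "c' = c" by (rule unique)
  then have "c' (i, j) = c (i, j)" by simp
  then show ?thesis using ij c_colour[OF D_less[OF ij]] by (simp add: c'_def)
qed

lemma uncoloured_sees_all_colours:
  assumes "(i, j) \<in> U" "t \<in> {1..k}"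
  shows "t \<in> row_colours i \<or> t \<in> col_colours j"
proof (rule ccontr)
  assume t: "\<not> ?thesis"
  have "(\<lambda>_. t) (i, j) = colour i j"
    by (rule recolouring_eq_colour[of "{(i, j)}"])
      (use assms t colour_in_row_colours colour_in_col_colours in auto)
  then show False using t colour_in_row_colours uncoloured_less[OF assms(1)] by auto
qed

lemma swap_blocked_row:
  assumes e: "(i, j) \<in> U" and f: "(i, j') \<in> U" and "j \<noteq> j'"
  shows "colour i j' \<in> col_colours j \<or> colour i j \<in> col_colours j'"
proof (rule ccontr)
  assume nc: "\<not> ?thesis"
  have less: "i < n" "j < n" "j' < n" using uncoloured_less[OF e] uncoloured_less[OF f] by auto
  define w where "w = (\<lambda>z. if z = (i, j) then colour i j' else colour i j)"
  have "w (i, j) = colour i j"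
  proof (rule recolouring_eq_colour[of "{(i, j), (i, j')}"])
    show "w (a, b) \<noteq> colour a' b" if "(a, b) \<in> {(i, j), (i, j')}" "(a', b) \<notin> {(i, j), (i, j')}" "a' < n"
      for a a' b
      using that nc colour_in_col_colours[OF \<open>a' < n\<close>, of b] \<open>j \<noteq> j'\<close> by (auto simp: w_def)
  qed (use e f less \<open>j \<noteq> j'\<close> colour_range in \<open>auto simp: w_def colour_row_eq_iff\<close>)
  then show False using \<open>j \<noteq> j'\<close> less by (simp add: w_def colour_row_eq_iff)
qed

lemma transpose_simps:
  "unique_completion.colour (c \<circ> prod.swap) i j = colour j i"
  "unique_completion.row_colours n (c \<circ> prod.swap) i = col_colours i"
  "unique_completion.col_colours n (c \<circ> prod.swap) j = row_colours j"
proof -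
  interpret T: unique_completion n k "c \<circ> prod.swap" "U\<inverse>" by (rule transpose)
  have colour: "T.colour a b = colour b a" for a b by (simp add: T.colour_def colour_def)
  then show "T.colour i j = colour j i" .
  show "T.row_colours i = col_colours i" "T.col_colours j = row_colours j"
    by (simp_all add: T.row_colours_def T.col_colours_def row_colours_def col_colours_def colour)
qed

lemma swap_blocked_col:
  assumes "(i, j) \<in> U" "(i', j) \<in> U" "i \<noteq> i'"
  shows "colour i' j \<in> row_colours i \<or> colour i j \<in> row_colours i'"
proof -
  interpret T: unique_completion n k "c \<circ> prod.swap" "U\<inverse>" by (rule transpose)
  show ?thesis
    using T.swap_blocked_row[of j i i'] assms by (simp add: transpose_simps)
qed

lemma rectangle_recolouring_clashes:
  assumes e: "(i, j) \<in> U" and f: "(i, j') \<in> U" and g: "(i', j') \<in> U" and h: "(i', j) \<in> U"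
    and "i \<noteq> i'" "j \<noteq> j'"
    and x: "{xe, xf, xg, xh} \<subseteq> {1..k}" "xe \<noteq> xf" "xf \<noteq> xg" "xg \<noteq> xh" "xh \<noteq> xe" "xe \<noteq> colour i j"
  shows "xe \<in> row_colours i - {colour i j, colour i j'} \<or> xf \<in> row_colours i - {colour i j, colour i j'} \<or>
    xg \<in> row_colours i' - {colour i' j, colour i' j'} \<or> xh \<in> row_colours i' - {colour i' j, colour i' j'} \<or>
    xe \<in> col_colours j - {colour i j, colour i' j} \<or> xh \<in> col_colours j - {colour i j, colour i' j} \<or>
    xf \<in> col_colours j' - {colour i j', colour i' j'} \<or> xg \<in> col_colours j' - {colour i j', colour i' j'}"
proof (rule ccontr)
  define Row where "Row a = row_colours a - {colour a j, colour a j'}" for a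
  define Col where "Col b = col_colours b - {colour i b, colour i' b}" for b
  assume "\<not> ?thesis"
  then have nc: "\<not> (xe \<in> Row i \<or> xf \<in> Row i \<or> xg \<in> Row i' \<or> xh \<in> Row i' \<or>
      xe \<in> Col j \<or> xh \<in> Col j \<or> xf \<in> Col j' \<or> xg \<in> Col j')"
    unfolding Row_def Col_def .
  have less: "i < n" "i' < n" "j < n" "j' < n" using uncoloured_less[OF e] uncoloured_less[OF g] by auto
  define D where "D = {(i, j), (i, j'), (i', j'), (i', j)}"
  define w where "w = (\<lambda>z. if z = (i, j) then xe else if z = (i, j') then xf else if z = (i', j') then xg else xh)"
  have w: "w (i, j) = xe" "w (i, j') = xf" "w (i', j') = xg" "w (i', j) = xh"
    using \<open>i \<noteq> i'\<close> \<open>j \<noteq> j'\<close> by (auto simp: w_def)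
  have "w (i, j) = colour i j"
  proof (rule recolouring_eq_colour[of D])
    show "w (a, b) \<noteq> colour a b'" if "(a, b) \<in> D" "(a, b') \<notin> D" "b' < n" for a b b'
    proof
      assume "w (a, b) = colour a b'"
      moreover have "colour a b' \<in> Row a"
        using that less by (auto simp: D_def Row_def colour_in_row_colours colour_row_eq_iff)
      ultimately show False using that(1) nc w by (auto simp: D_def)
    qed
    show "w (a, b) \<noteq> colour a' b" if "(a, b) \<in> D" "(a', b) \<notin> D" "a' < n" for a a' b
    proof
      assume "w (a, b) = colour a' b"
      moreover have "colour a' b \<in> Col b"
        using that less by (auto simp: D_def Col_def colour_in_col_colours colour_col_eq_iff)
      ultimately show False using that(1) nc w by (auto simp: D_def)
    qed
  qed (use e f g h x w \<open>i \<noteq> i'\<close> \<open>j \<noteq> j'\<close> in \<open>auto simp: D_def\<close>)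
  then show False using w x by simp
qed

end

section \<open>Discharging on bipartite graphs\<close>

locale forbidden_free =
  fixes E :: "('a \<times> 'b) set"
  assumes finite_edges: "finite E"
    and degree_le_3: "card (E `` {i}) \<le> 3"
    and no_C4: "(i, j) \<in> E \<Longrightarrow> (i, j') \<in> E \<Longrightarrow> (i', j) \<in> E \<Longrightarrow> (i', j') \<in> E \<Longrightarrow>
      i = i' \<or> j = j'"
    and no_P6: "(i1, j1) \<in> E \<Longrightarrow> (i2, j1) \<in> E \<Longrightarrow> (i2, j2) \<in> E \<Longrightarrow> (i3, j2) \<in> E \<Longrightarrow>
      (i3, j3) \<in> E \<Longrightarrow> distinct [i1, i2, i3] \<Longrightarrow> distinct [j1, j2, j3] \<Longrightarrow> False"
    and no_S311: "(i, j1) \<in> E \<Longrightarrow> (i, j2) \<in> E \<Longrightarrow> (i, j3) \<in> E \<Longrightarrow> (i', j1) \<in> E \<Longrightarrow>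
      (i', j4) \<in> E \<Longrightarrow> i \<noteq> i' \<Longrightarrow> distinct [j1, j2, j3, j4] \<Longrightarrow> False"
    and no_S221: "(i, j1) \<in> E \<Longrightarrow> (i, j2) \<in> E \<Longrightarrow> (i, j3) \<in> E \<Longrightarrow> (i1, j1) \<in> E \<Longrightarrow>
      (i2, j2) \<in> E \<Longrightarrow> distinct [i, i1, i2] \<Longrightarrow> distinct [j1, j2, j3] \<Longrightarrow> False"
    and no_double_star: "(i, j) \<in> E \<Longrightarrow> (i, j1) \<in> E \<Longrightarrow> (i, j2) \<in> E \<Longrightarrow> (i1, j) \<in> E \<Longrightarrow>
      (i2, j) \<in> E \<Longrightarrow> distinct [i, i1, i2] \<Longrightarrow> distinct [j, j1, j2] \<Longrightarrow> False"

abbreviation degree :: "('a \<times> 'b) set \<Rightarrow> 'a \<Rightarrow> nat" where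
  "degree E i \<equiv> card (E `` {i})"

text \<open>Every edge carries charge 5, split into share E i j for its row end and share (E\<inverse>) j i for
  its column end.\<close>

definition share :: "('a \<times> 'b) set \<Rightarrow> 'a \<Rightarrow> 'b \<Rightarrow> nat" where
  "share E i j =
    (if degree E i = 1 then 4
     else if degree (E\<inverse>) j = 1 then 1
     else if degree E i = 2 \<and> (\<exists>j'. (i, j') \<in> E \<and> degree (E\<inverse>) j' = 1) then 3
     else 2)"

lemma other_neighbour:
  assumes "finite E" "(x, y) \<in> E" "card (E `` {x}) \<noteq> 1"
  obtains y' where "(x, y') \<in> E" "y' \<noteq> y"
proof -
  have "E `` {x} \<noteq> {y}" using assms(3) by auto
  then show thesis using that assms(2) by blast
qed

context forbidden_free
begin

lemma degree_cases:
  assumes "(i, j) \<in> E"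
  obtains "E `` {i} = {j}"
    | j' where "E `` {i} = {j, j'}" "j' \<noteq> j"
    | j1 j2 where "E `` {i} = {j, j1, j2}" "distinct [j, j1, j2]"
proof -
  have j: "j \<in> E `` {i}" using assms by blast
  have "finite (E `` {i})" using finite_edges by simp
  then have "card (E `` {i}) \<noteq> 0" using j by auto
  then consider "card (E `` {i}) = 1" | "card (E `` {i}) = 2" | "card (E `` {i}) = 3"
    using degree_le_3[of i] by linarith
  then show thesis
  proof cases
    case 1 then show ?thesis using that(1) j by (metis card_1_singletonE singletonD)
  next
    case 2
    then obtain x y where "E `` {i} = {x, y}" "x \<noteq> y" by (meson card_2_iff)
    then show ?thesis using that(2) j by (metis doubleton_eq_iff insertE singletonD)
  next
    case 3
    then obtain x y z where xyz: "E `` {i} = {x, y, z}" "x \<noteq> y" "y \<noteq> z" "x \<noteq> z" by (meson card_3_iff)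
    then consider "j = x" | "j = y" | "j = z" using j by blast
    then show ?thesis
    proof cases
      case 1 then show ?thesis using that(3)[of y z] xyz by simp
    next
      case 2 then show ?thesis using that(3)[of x z] xyz by (simp add: insert_commute)
    next
      case 3 then show ?thesis using that(3)[of x y] xyz by (simp add: insert_commute)
    qed
  qed
qed

lemma row_load_le_4: "(\<Sum>j \<in> E `` {i}. share E i j) \<le> 4"
proof (cases "E `` {i} = {}")
  case False
  then obtain j where "(i, j) \<in> E" by blast
  then show ?thesis
  proof (cases rule: degree_cases)
    case 1
    then show ?thesis by (simp add: share_def)
  next
    case (2 j')
    have "(i, y) \<in> E \<longleftrightarrow> y = j \<or> y = j'" for y
      using 2(1) by (simp flip: Image_singleton_iff)
    then have "(\<exists>y. (i, y) \<in> E \<and> degree (E\<inverse>) y = 1) \<longleftrightarrow>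
        degree (E\<inverse>) j = 1 \<or> degree (E\<inverse>) j' = 1"
      by auto
    then have "share E i y =
        (if degree (E\<inverse>) y = 1 then 1 else if degree (E\<inverse>) j = 1 \<or> degree (E\<inverse>) j' = 1 then 3 else 2)"
      for y
      using 2 by (simp add: share_def)
    then show ?thesis using 2 by simp
  next
    case (3 j1 j2)
    have nb: "(i, y) \<in> E \<longleftrightarrow> y = j \<or> y = j1 \<or> y = j2" for y
      using 3(1) by (simp flip: Image_singleton_iff)
    have some_leaf: "degree (E\<inverse>) a = 1 \<or> degree (E\<inverse>) b = 1"
      if ab: "(i, a) \<in> E" "(i, b) \<in> E" "a \<noteq> b" for a b
    proof (rule ccontr)
      assume "\<not> ?thesis"
      then have "degree (E\<inverse>) a \<noteq> 1" "degree (E\<inverse>) b \<noteq> 1" by simp_all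
      from other_neighbour[of "E\<inverse>" a i] obtain i1 where i1: "(i1, a) \<in> E" "i1 \<noteq> i"
        using finite_edges ab \<open>degree (E\<inverse>) a \<noteq> 1\<close> by auto
      from other_neighbour[of "E\<inverse>" b i] obtain i2 where i2: "(i2, b) \<in> E" "i2 \<noteq> i"
        using finite_edges ab \<open>degree (E\<inverse>) b \<noteq> 1\<close> by auto
      have "i1 \<noteq> i2" using no_C4[of i a b i1] ab i1 i2 by auto
      have "\<exists>c \<in> {j, j1, j2}. c \<noteq> a \<and> c \<noteq> b" using 3(2) by auto
      then obtain c where "(i, c) \<in> E" "distinct [a, b, c]" using nb ab(3) by auto
      then show False using no_S221[of i a b c i1 i2] ab i1 i2 \<open>i1 \<noteq> i2\<close> by auto
    qed
    have "(i, j) \<in> E" "(i, j1) \<in> E" "(i, j2) \<in> E" by (simp_all add: nb)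
    then have "degree (E\<inverse>) j = 1 \<or> degree (E\<inverse>) j1 = 1" "degree (E\<inverse>) j = 1 \<or> degree (E\<inverse>) j2 = 1"
      "degree (E\<inverse>) j1 = 1 \<or> degree (E\<inverse>) j2 = 1"
      using some_leaf 3(2) by auto
    moreover have "share E i y = (if degree (E\<inverse>) y = 1 then 1 else 2)" for y
      using 3 by (simp add: share_def)
    moreover have "(\<Sum>y \<in> E `` {i}. share E i y) = share E i j + share E i j1 + share E i j2"
      using 3 by simp
    ultimately show ?thesis by auto
  qed
qed simp

lemma path_end_is_leaf:
  assumes "(i, j) \<in> E" "(i, j') \<in> E" "(i', j) \<in> E" "j' \<noteq> j" "i' \<noteq> i"
  shows "degree (E\<inverse>) j' = 1 \<or> degree E i' = 1"
proof (rule ccontr)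
  assume "\<not> ?thesis"
  then have "degree (E\<inverse>) j' \<noteq> 1" "degree E i' \<noteq> 1" by simp_all
  from other_neighbour[of "E\<inverse>" j' i] obtain i2 where i2: "(i2, j') \<in> E" "i2 \<noteq> i"
    using finite_edges assms \<open>degree (E\<inverse>) j' \<noteq> 1\<close> by auto
  from other_neighbour[of E i' j] obtain j2 where j2: "(i', j2) \<in> E" "j2 \<noteq> j"
    using finite_edges assms \<open>degree E i' \<noteq> 1\<close> by auto
  have "i2 \<noteq> i'" using no_C4[of i j j' i'] assms i2 by auto
  moreover have "j2 \<noteq> j'" using no_C4[of i j j' i'] assms j2 by auto
  ultimately show False using no_P6[of i2 j' i j i' j2] assms i2 j2 by auto
qed

lemma leaf_if_meets_degree_3:
  assumes "(i, j) \<in> E" "(i', j) \<in> E" "i' \<noteq> i" "degree E i = 3"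
  shows "degree E i' = 1"
proof (rule ccontr)
  assume "degree E i' \<noteq> 1"
  from other_neighbour[of E i' j] obtain j' where j': "(i', j') \<in> E" "j' \<noteq> j"
    using finite_edges assms \<open>degree E i' \<noteq> 1\<close> by auto
  from assms(1) show False
  proof (cases rule: degree_cases)
    case (3 j1 j2)
    then have "(i, j1) \<in> E" "(i, j2) \<in> E" by auto
    moreover have "j' \<noteq> j1" "j' \<noteq> j2"
      using no_C4[of i j j1 i'] no_C4[of i j j2 i'] assms j' 3(2) \<open>(i, j1) \<in> E\<close> \<open>(i, j2) \<in> E\<close> by auto
    ultimately show False using no_S311[of i j j1 j2 i' j'] assms j' 3(2) by auto
  qed (use assms(4) in auto)
qed

end

lemma leaf_next_to_inner_edge:
  assumes "forbidden_free E" "forbidden_free (E\<inverse>)" "(i, j) \<in> E"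
    and "degree E i \<noteq> 1" "degree (E\<inverse>) j \<noteq> 1"
  shows "(degree E i = 2 \<and> (\<exists>j'. (i, j') \<in> E \<and> degree (E\<inverse>) j' = 1)) \<or>
    (degree (E\<inverse>) j = 2 \<and> (\<exists>i'. (i', j) \<in> E \<and> degree E i' = 1))"
proof -
  interpret R: forbidden_free E by fact
  interpret C: forbidden_free "E\<inverse>" by fact
  have ji: "(j, i) \<in> E\<inverse>" using assms(3) by simp
  show ?thesis
  proof (cases rule: R.degree_cases[OF assms(3)])
    case (2 j')
    then have j': "(i, j') \<in> E" "j' \<noteq> j" "E `` {i} = {j, j'}" by auto
    show ?thesis
    proof (cases rule: C.degree_cases[OF ji])
      case (2 i')
      then show ?thesis using R.path_end_is_leaf[of i j j' i'] assms(3) j' by auto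
    next
      case (3 i1 i2)
      then show ?thesis using C.leaf_if_meets_degree_3[of j i j'] ji j' by auto
    qed (use assms(5) in auto)
  next
    case (3 j1 j2)
    then have j12: "(i, j1) \<in> E" "(i, j2) \<in> E" "distinct [j, j1, j2]" "E `` {i} = {j, j1, j2}" by auto
    show ?thesis
    proof (cases rule: C.degree_cases[OF ji])
      case (2 i')
      then show ?thesis using R.leaf_if_meets_degree_3[of i j i'] assms(3) j12 by auto
    next
      case (3 i1 i2)
      then show ?thesis using R.no_double_star[of i j j1 j2 i1 i2] assms(3) j12 by auto
    qed (use assms(5) in auto)
  qed (use assms(4) in auto)
qed

lemma edge_share_ge_5:
  assumes "forbidden_free E" "forbidden_free (E\<inverse>)" "(i, j) \<in> E"
  shows "5 \<le> share E i j + share (E\<inverse>) j i"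
proof -
  have "1 \<le> share E i j" "1 \<le> share (E\<inverse>) j i" by (simp_all add: share_def)
  moreover have "degree E i = 1 \<Longrightarrow> share E i j = 4" "degree (E\<inverse>) j = 1 \<Longrightarrow> share (E\<inverse>) j i = 4"
    by (simp_all add: share_def)
  moreover have "2 \<le> share E i j \<and> 2 \<le> share (E\<inverse>) j i \<and> (3 \<le> share E i j \<or> 3 \<le> share (E\<inverse>) j i)"
    if "degree E i \<noteq> 1" "degree (E\<inverse>) j \<noteq> 1"
    using leaf_next_to_inner_edge[OF assms that] that by (auto simp: share_def)
  ultimately show ?thesis by fastforce
qed

lemma sum_over_relation:
  assumes "finite E"
  shows "(\<Sum>(i, j) \<in> E. f i j) = (\<Sum>i \<in> Domain E. \<Sum>j \<in> E `` {i}. f i j)"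
proof -
  have "Sigma (Domain E) (\<lambda>i. E `` {i}) = E" by auto
  moreover have "finite (Domain E)" "\<forall>i \<in> Domain E. finite (E `` {i})"
    using assms by (simp_all add: finite_Domain)
  ultimately show ?thesis using sum.Sigma[of "Domain E" "\<lambda>i. E `` {i}" "\<lambda>i j. f i j"] by simp
qed

theorem five_card_le_if_forbidden_free:
  assumes "forbidden_free E" "forbidden_free (E\<inverse>)"
  shows "5 * card E \<le> 4 * (card (Domain E) + card (Range E))"
proof -
  interpret R: forbidden_free E by fact
  interpret C: forbidden_free "E\<inverse>" by fact
  have "(\<Sum>(i, j) \<in> E. share (E\<inverse>) j i) = (\<Sum>(j, i) \<in> E\<inverse>. share (E\<inverse>) j i)"
    by (rule sum.reindex_bij_witness[where i = prod.swap and j = prod.swap]) auto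
  then have "5 * card E \<le> (\<Sum>(i, j) \<in> E. share E i j) + (\<Sum>(j, i) \<in> E\<inverse>. share (E\<inverse>) j i)"
    using edge_share_ge_5[OF assms] sum_mono[of E "\<lambda>_. 5" "\<lambda>(i, j). share E i j + share (E\<inverse>) j i"]
    by (simp add: sum.distrib split_def)
  also have "\<dots> \<le> (\<Sum>i \<in> Domain E. 4) + (\<Sum>j \<in> Domain (E\<inverse>). 4)"
    unfolding sum_over_relation[OF R.finite_edges] sum_over_relation[OF C.finite_edges]
    by (intro add_mono sum_mono R.row_load_le_4 C.row_load_le_4)
  finally show ?thesis by simp
qed

section \<open>Uncoloured cells of a defining set for 2n - 2 colours\<close>

text \<open>For an uncoloured cell (i, j) and 2n - 2 colours, row i and column j together show every
  colour and have exactly two colours in common: that of the cell and its twin. The forbidden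
  configurations below come down to the following statements about such sets, in which vab is the
  colour in row a and column b of a small subarray and tab the twin of an uncoloured cell.\<close>

definition tight_cross :: "'a set \<Rightarrow> 'a set \<Rightarrow> 'a set \<Rightarrow> 'a \<Rightarrow> 'a \<Rightarrow> bool" where
  "tight_cross K A B a p \<longleftrightarrow> K \<subseteq> A \<union> B \<and> A \<inter> B = {a, p} \<and> a \<noteq> p"

lemma tight_crossD:
  assumes "tight_cross K A B a p"
  shows "a \<in> A \<and> a \<in> B \<and> p \<in> A \<and> p \<in> B \<and> a \<noteq> p \<and>
    (\<forall>t. t \<in> A \<longrightarrow> t \<in> B \<longrightarrow> t = a \<or> t = p) \<and> (\<forall>t \<in> K. t \<in> A \<or> t \<in> B)"
  using assms unfolding tight_cross_def by blast

lemma tight_cross_C4_contradiction: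
  assumes "tight_cross K R1 C1 v11 t11" "tight_cross K R1 C2 v12 t12"
    "tight_cross K R2 C1 v21 t21" "tight_cross K R2 C2 v22 t22"
    and "v12 \<in> C1 \<or> v11 \<in> C2" "v21 \<in> R1 \<or> v11 \<in> R2"
    and "v21 \<in> R1 - {v11, v12} \<or> v12 \<in> R2 - {v21, v22} \<or> v22 \<in> C1 - {v11, v21} \<or> v11 \<in> C2 - {v12, v22}"
      "v22 \<in> R1 - {v11, v12} \<or> v11 \<in> R2 - {v21, v22} \<or> v12 \<in> C1 - {v11, v21} \<or> v21 \<in> C2 - {v12, v22}"
    and "distinct [v11, v12]" "distinct [v21, v22]" "distinct [v11, v21]" "distinct [v12, v22]"
    and "{v11, v12, v21, v22, t11, t12, t21, t22} \<subseteq> K"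
  shows False
  using assms(1-4)[THEN tight_crossD] assms(5-) by simp (smt (z3))

lemma tight_cross_P6_contradiction:
  assumes "tight_cross K R1 C1 v11 t11" "tight_cross K R2 C1 v21 t21" "tight_cross K R2 C2 v22 t22"
    "tight_cross K R3 C2 v32 t32" "tight_cross K R3 C3 v33 t33"
    and "t11 = v21 \<or> t21 = v11" "t21 = v22 \<or> t22 = v21" "t22 = v32 \<or> t32 = v22" "t32 = v33 \<or> t33 = v32"
    and "v12 \<in> R1 \<inter> C2" "v13 \<in> R1 \<inter> C3" "v23 \<in> R2 \<inter> C3" "v31 \<in> R3 \<inter> C1"
    and "distinct [v11, v12, v13]" "distinct [v21, v22, v23]" "distinct [v31, v32, v33]"
      "distinct [v11, v21, v31]" "distinct [v12, v22, v32]" "distinct [v13, v23, v33]"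
    and "{v11, v12, v13, v21, v22, v23, v31, v32, v33, t11, t21, t22, t32, t33} \<subseteq> K"
  shows False
  using assms(1-5)[THEN tight_crossD] assms(6-) by simp (smt (z3))

lemma tight_cross_S311_contradiction:
  assumes "tight_cross K R1 C1 v11 t11" "tight_cross K R1 C2 v12 t12" "tight_cross K R1 C3 v13 t13"
    "tight_cross K R2 C1 v21 t21" "tight_cross K R2 C4 v24 t24"
    and "t11 = v12 \<or> t12 = v11" "t11 = v13 \<or> t13 = v11" "t12 = v13 \<or> t13 = v12"
      "t11 = v21 \<or> t21 = v11" "t21 = v24 \<or> t24 = v21"
    and "v14 \<in> R1 \<inter> C4" "v22 \<in> R2 \<inter> C2" "v23 \<in> R2 \<inter> C3"
    and "distinct [v11, v12, v13, v14]" "distinct [v21, v22, v23, v24]"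
      "distinct [v11, v21]" "distinct [v12, v22]" "distinct [v13, v23]" "distinct [v14, v24]"
    and "{v11, v12, v13, v14, v21, v22, v23, v24, t11, t12, t13, t21, t24} \<subseteq> K"
  shows False
  using assms(1-5)[THEN tight_crossD] assms(6-) by simp (smt (z3))

lemma tight_cross_S221_contradiction:
  assumes "tight_cross K R1 C1 v11 t11" "tight_cross K R1 C2 v12 t12" "tight_cross K R1 C3 v13 t13"
    "tight_cross K R2 C1 v21 t21" "tight_cross K R3 C2 v32 t32"
    and "t11 = v12 \<or> t12 = v11" "t11 = v13 \<or> t13 = v11" "t12 = v13 \<or> t13 = v12"
      "t11 = v21 \<or> t21 = v11" "t12 = v32 \<or> t32 = v12"
    and "v22 \<in> R2 \<inter> C2" "v23 \<in> R2 \<inter> C3" "v31 \<in> R3 \<inter> C1" "v33 \<in> R3 \<inter> C3"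
    and "distinct [v11, v12, v13]" "distinct [v21, v22, v23]" "distinct [v31, v32, v33]"
      "distinct [v11, v21, v31]" "distinct [v12, v22, v32]" "distinct [v13, v23, v33]"
    and "{v11, v12, v13, v21, v22, v23, v31, v32, v33, t11, t12, t13, t21, t32} \<subseteq> K"
  shows False
  using assms(1-5)[THEN tight_crossD] assms(6-) by simp (smt (z3))

lemma tight_cross_double_star_contradiction:
  assumes "tight_cross K R1 C1 v11 t11" "tight_cross K R1 C2 v12 t12" "tight_cross K R1 C3 v13 t13"
    "tight_cross K R2 C1 v21 t21" "tight_cross K R3 C1 v31 t31"
    and "t11 = v12 \<or> t12 = v11" "t11 = v13 \<or> t13 = v11" "t12 = v13 \<or> t13 = v12"
      "t11 = v21 \<or> t21 = v11" "t11 = v31 \<or> t31 = v11" "t21 = v31 \<or> t31 = v21"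
    and "v22 \<in> R2 \<inter> C2" "v23 \<in> R2 \<inter> C3" "v32 \<in> R3 \<inter> C2" "v33 \<in> R3 \<inter> C3"
    and "distinct [v11, v12, v13]" "distinct [v21, v22, v23]" "distinct [v31, v32, v33]"
      "distinct [v11, v21, v31]" "distinct [v12, v22, v32]" "distinct [v13, v23, v33]"
    and "{v11, v12, v13, v21, v22, v23, v31, v32, v33, t11, t12, t13, t21, t31} \<subseteq> K"
  shows False
  using assms(1-5)[THEN tight_crossD] assms(6-) by simp (smt (z3))

lemma card_le_3_if_no_four_distinct:
  assumes "finite A" "\<And>a b c d. {a, b, c, d} \<subseteq> A \<Longrightarrow> distinct [a, b, c, d] \<Longrightarrow> False"
  shows "card A \<le> 3"
proof (rule ccontr)
  assume "\<not> card A \<le> 3"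
  then obtain B where B: "B \<subseteq> A" "card B = Suc (Suc (Suc (Suc 0)))"
    by (metis obtain_subset_with_card_n not_less_eq_eq numeral_3_eq_3)
  then obtain a b c d where "B = {a, b, c, d}" "distinct [a, b, c, d]"
    by (auto simp: card_Suc_eq)
  then show False using assms(2)[of a b c d] B(1) by simp
qed

locale unique_completion_2n_2 = unique_completion +
  assumes colours: "k = 2 * n - 2"
begin

definition twin :: "nat \<Rightarrow> nat \<Rightarrow> nat" where
  "twin i j = (THE p. p \<in> row_colours i \<inter> col_colours j \<and> p \<noteq> colour i j)"

lemma transpose_2n_2: "unique_completion_2n_2 n k (c \<circ> prod.swap) (U\<inverse>)"
  using transpose colours by (simp add: unique_completion_2n_2_def unique_completion_2n_2_axioms_def)

lemma twin_transpose: "unique_completion_2n_2.twin n (c \<circ> prod.swap) i j = twin j i"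
proof -
  interpret T: unique_completion_2n_2 n k "c \<circ> prod.swap" "U\<inverse>" by (rule transpose_2n_2)
  show ?thesis by (simp add: T.twin_def twin_def transpose_simps conj_commute)
qed

lemma tight_cross_twin:
  assumes "(i, j) \<in> U"
  shows "tight_cross {1..k} (row_colours i) (col_colours j) (colour i j) (twin i j)"
proof -
  have less: "i < n" "j < n" using uncoloured_less[OF assms] by auto
  have "{1..k} \<subseteq> row_colours i \<union> col_colours j"
  proof
    fix t assume "t \<in> {1..k}"
    then show "t \<in> row_colours i \<union> col_colours j" using uncoloured_sees_all_colours[OF assms] by simp
  qed
  then have cover: "row_colours i \<union> col_colours j = {1..k}"
    using row_colours_range[OF less(1)] col_colours_range[OF less(2)] by (intro equalityI) simp_all
  have "card (row_colours i) + card (col_colours j) =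
      card (row_colours i \<union> col_colours j) + card (row_colours i \<inter> col_colours j)"
    by (rule card_Un_Int) (simp_all add: row_colours_def col_colours_def)
  then have "card (row_colours i \<inter> col_colours j) = 2"
    using card_row_colours[OF less(1)] card_col_colours[OF less(2)] cover colours less by simp
  then obtain x y where xy: "row_colours i \<inter> col_colours j = {x, y}" "x \<noteq> y"
    by (meson card_2_iff)
  moreover have "colour i j \<in> row_colours i \<inter> col_colours j"
    using less by (simp add: colour_in_row_colours colour_in_col_colours)
  ultimately obtain p where p: "row_colours i \<inter> col_colours j = {colour i j, p}" "p \<noteq> colour i j"
    by (cases "x = colour i j") (auto simp: insert_commute)
  have "twin i j = p"
    unfolding twin_def by (rule the_equality) (use p in \<open>auto simp: set_eq_iff\<close>)
  then show ?thesis using p cover by (simp add: tight_cross_def)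
qed

lemma twin_range:
  assumes "(i, j) \<in> U"
  shows "twin i j \<in> {1..k}"
proof -
  have "twin i j \<in> row_colours i" using tight_crossD[OF tight_cross_twin[OF assms]] by simp
  then show ?thesis using row_colours_range uncoloured_less[OF assms] by blast
qed

lemma twin_swap_row:
  assumes "(i, j) \<in> U" "(i, j') \<in> U" "j \<noteq> j'"
  shows "twin i j = colour i j' \<or> twin i j' = colour i j"
proof -
  have less: "i < n" "j < n" "j' < n" using uncoloured_less assms by auto
  then have ne: "colour i j' \<noteq> colour i j" using assms(3) by (simp add: colour_row_eq_iff)
  have "colour i j' \<in> row_colours i" "colour i j \<in> row_colours i"
    using less by (simp_all add: colour_in_row_colours)
  then show ?thesis
    using swap_blocked_row[OF assms] ne tight_crossD[OF tight_cross_twin[OF assms(1)]]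
      tight_crossD[OF tight_cross_twin[OF assms(2)]]
    by metis
qed

lemma twin_swap_col:
  assumes "(i, j) \<in> U" "(i', j) \<in> U" "i \<noteq> i'"
  shows "twin i j = colour i' j \<or> twin i' j = colour i j"
proof -
  interpret T: unique_completion_2n_2 n k "c \<circ> prod.swap" "U\<inverse>" by (rule transpose_2n_2)
  show ?thesis using T.twin_swap_row[of j i i'] assms by (simp add: twin_transpose transpose_simps)
qed

lemma finite_uncoloured: "finite U"
  using uncoloured_cells by (rule finite_subset) (simp add: cells_def)

lemmas colour_facts = colour_in_row_colours colour_in_col_colours colour_row_eq_iff colour_col_eq_iff

lemma degree_le_3: "card (U `` {i}) \<le> 3"
proof (rule card_le_3_if_no_four_distinct)
  show "finite (U `` {i})" using finite_uncoloured by simp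
  fix a b c d assume "{a, b, c, d} \<subseteq> U `` {i}" "distinct [a, b, c, d]"
  then have u: "(i, a) \<in> U" "(i, b) \<in> U" "(i, c) \<in> U" "(i, d) \<in> U" and ne: "distinct [a, b, c, d]" by auto
  then have "distinct [colour i a, colour i b, colour i c, colour i d]"
    using uncoloured_less by (simp add: colour_row_eq_iff)
  \<comment> \<open>each of the six pairs x, y needs twin i x = colour i y or the reverse, but twin i x is the
    colour of at most one cell of the row\<close>
  with twin_swap_row[OF u(1) u(2)] twin_swap_row[OF u(1) u(3)] twin_swap_row[OF u(1) u(4)]
    twin_swap_row[OF u(2) u(3)] twin_swap_row[OF u(2) u(4)] twin_swap_row[OF u(3) u(4)] ne
  show False by auto
qed

lemma no_C4:
  assumes e: "(i, j) \<in> U" and f: "(i, j') \<in> U" and h: "(i', j) \<in> U" and g: "(i', j') \<in> U"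
  shows "i = i' \<or> j = j'"
proof (rule ccontr)
  assume "\<not> ?thesis"
  then have ne: "i \<noteq> i'" "j \<noteq> j'" by simp_all
  have less: "i < n" "i' < n" "j < n" "j' < n" using uncoloured_less e g by auto
  have K: "{colour i' j, colour i j, colour i j', colour i' j'} \<subseteq> {1..k}"
    "{colour i j', colour i' j', colour i' j, colour i j} \<subseteq> {1..k}"
    using colour_range less by auto
  \<comment> \<open>rotate the four colours around the rectangle, in both directions\<close>
  have rotate: "colour i' j \<in> row_colours i - {colour i j, colour i j'} \<or>
      colour i j' \<in> row_colours i' - {colour i' j, colour i' j'} \<or>
      colour i' j' \<in> col_colours j - {colour i j, colour i' j} \<or>
      colour i j \<in> col_colours j' - {colour i j', colour i' j'}"
    using rectangle_recolouring_clashes[OF e f g h ne K(1)] less ne by (simp add: colour_facts)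
  have rotate': "colour i' j' \<in> row_colours i - {colour i j, colour i j'} \<or>
      colour i j \<in> row_colours i' - {colour i' j, colour i' j'} \<or>
      colour i j' \<in> col_colours j - {colour i j, colour i' j} \<or>
      colour i' j \<in> col_colours j' - {colour i j', colour i' j'}"
    using rectangle_recolouring_clashes[OF e f g h ne K(2)] less ne by (simp add: colour_facts)
  show False
    by (rule tight_cross_C4_contradiction[OF tight_cross_twin[OF e] tight_cross_twin[OF f]
          tight_cross_twin[OF h] tight_cross_twin[OF g] swap_blocked_row[OF e f ne(2)]
          swap_blocked_col[OF e h ne(1)] rotate rotate'])
      (use less ne e f g h colour_range twin_range in \<open>simp_all add: colour_row_eq_iff colour_col_eq_iff\<close>)
qed

lemma no_P6:
  assumes u: "(i1, j1) \<in> U" "(i2, j1) \<in> U" "(i2, j2) \<in> U" "(i3, j2) \<in> U" "(i3, j3) \<in> U"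
    and "distinct [i1, i2, i3]" "distinct [j1, j2, j3]"
  shows False
proof -
  have less: "i1 < n" "i2 < n" "i3 < n" "j1 < n" "j2 < n" "j3 < n" using uncoloured_less u by auto
  show False
    by (rule tight_cross_P6_contradiction[where ?v12.0 = "colour i1 j2" and ?v13.0 = "colour i1 j3"
          and ?v23.0 = "colour i2 j3" and ?v31.0 = "colour i3 j1",
          OF tight_cross_twin[OF u(1)] tight_cross_twin[OF u(2)] tight_cross_twin[OF u(3)]
          tight_cross_twin[OF u(4)] tight_cross_twin[OF u(5)]
          twin_swap_col[OF u(1) u(2)] twin_swap_row[OF u(2) u(3)] twin_swap_col[OF u(3) u(4)]
          twin_swap_row[OF u(4) u(5)]])
      (use assms less colour_range twin_range in \<open>simp_all add: colour_facts\<close>)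
qed

lemma no_S311:
  assumes u: "(i, j1) \<in> U" "(i, j2) \<in> U" "(i, j3) \<in> U" "(i', j1) \<in> U" "(i', j4) \<in> U"
    and "i \<noteq> i'" "distinct [j1, j2, j3, j4]"
  shows False
proof -
  have less: "i < n" "i' < n" "j1 < n" "j2 < n" "j3 < n" "j4 < n" using uncoloured_less u by auto
  show False
    by (rule tight_cross_S311_contradiction[where ?v14.0 = "colour i j4" and ?v22.0 = "colour i' j2"
          and ?v23.0 = "colour i' j3",
          OF tight_cross_twin[OF u(1)] tight_cross_twin[OF u(2)] tight_cross_twin[OF u(3)]
          tight_cross_twin[OF u(4)] tight_cross_twin[OF u(5)]
          twin_swap_row[OF u(1) u(2)] twin_swap_row[OF u(1) u(3)] twin_swap_row[OF u(2) u(3)]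
          twin_swap_col[OF u(1) u(4)] twin_swap_row[OF u(4) u(5)]])
      (use assms less colour_range twin_range in \<open>simp_all add: colour_facts\<close>)
qed

lemma no_S221:
  assumes u: "(i, j1) \<in> U" "(i, j2) \<in> U" "(i, j3) \<in> U" "(i1, j1) \<in> U" "(i2, j2) \<in> U"
    and "distinct [i, i1, i2]" "distinct [j1, j2, j3]"
  shows False
proof -
  have less: "i < n" "i1 < n" "i2 < n" "j1 < n" "j2 < n" "j3 < n" using uncoloured_less u by auto
  show False
    by (rule tight_cross_S221_contradiction[where ?v22.0 = "colour i1 j2" and ?v23.0 = "colour i1 j3"
          and ?v31.0 = "colour i2 j1" and ?v33.0 = "colour i2 j3",
          OF tight_cross_twin[OF u(1)] tight_cross_twin[OF u(2)] tight_cross_twin[OF u(3)]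
          tight_cross_twin[OF u(4)] tight_cross_twin[OF u(5)]
          twin_swap_row[OF u(1) u(2)] twin_swap_row[OF u(1) u(3)] twin_swap_row[OF u(2) u(3)]
          twin_swap_col[OF u(1) u(4)] twin_swap_col[OF u(2) u(5)]])
      (use assms less colour_range twin_range in \<open>simp_all add: colour_facts\<close>)
qed

lemma no_double_star:
  assumes u: "(i, j) \<in> U" "(i, j1) \<in> U" "(i, j2) \<in> U" "(i1, j) \<in> U" "(i2, j) \<in> U"
    and "distinct [i, i1, i2]" "distinct [j, j1, j2]"
  shows False
proof -
  have less: "i < n" "i1 < n" "i2 < n" "j < n" "j1 < n" "j2 < n" using uncoloured_less u by auto
  show False
    by (rule tight_cross_double_star_contradiction[where ?v22.0 = "colour i1 j1"
          and ?v23.0 = "colour i1 j2" and ?v32.0 = "colour i2 j1" and ?v33.0 = "colour i2 j2",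
          OF tight_cross_twin[OF u(1)] tight_cross_twin[OF u(2)] tight_cross_twin[OF u(3)]
          tight_cross_twin[OF u(4)] tight_cross_twin[OF u(5)]
          twin_swap_row[OF u(1) u(2)] twin_swap_row[OF u(1) u(3)] twin_swap_row[OF u(2) u(3)]
          twin_swap_col[OF u(1) u(4)] twin_swap_col[OF u(1) u(5)] twin_swap_col[OF u(4) u(5)]])
      (use assms less colour_range twin_range in \<open>simp_all add: colour_facts\<close>)
qed

lemma forbidden_free_uncoloured: "forbidden_free U"
  by unfold_locales (rule finite_uncoloured degree_le_3 no_C4 no_P6 no_S311 no_S221 no_double_star; assumption)+

lemma five_card_uncoloured_le: "5 * card U \<le> 8 * n"
proof -
  interpret T: unique_completion_2n_2 n k "c \<circ> prod.swap" "U\<inverse>" by (rule transpose_2n_2)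
  have "Domain U \<subseteq> {..<n}" "Range U \<subseteq> {..<n}" using uncoloured_less by auto
  then have "card (Domain U) \<le> n" "card (Range U) \<le> n"
    using card_mono[of "{..<n}"] by fastforce+
  then show ?thesis
    using five_card_le_if_forbidden_free[OF forbidden_free_uncoloured T.forbidden_free_uncoloured] by simp
qed

end

section \<open>A defining set with 8n/5 uncoloured cells\<close>

text \<open>Every diagonal 5 x 5 block carries this array on the colours 1..8; its entries at block_holes
  are erased, and the remaining entries of the block already force them.\<close>

definition block_colour :: "nat \<Rightarrow> nat \<Rightarrow> nat" where
  "block_colour a b =
    [[1, 2, 3, 4, 5], [2, 7, 4, 5, 3], [7, 6, 5, 3, 4], [8, 1, 6, 7, 2], [6, 8, 7, 2, 1]] ! a ! b"

definition block_holes :: "(nat \<times> nat) set" where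
  "block_holes = {(0, 0), (1, 0), (1, 1), (2, 1), (3, 2), (3, 3), (4, 3), (4, 4)}"

lemma less_5_iff: "(a::nat) < 5 \<longleftrightarrow> a = 0 \<or> a = 1 \<or> a = 2 \<or> a = 3 \<or> a = 4"
  by auto

lemma block_colour_range: "a < 5 \<Longrightarrow> b < 5 \<Longrightarrow> block_colour a b \<in> {1..8}"
  by (auto simp: less_5_iff block_colour_def)

lemma block_colour_row_eq_iff:
  "a < 5 \<Longrightarrow> b < 5 \<Longrightarrow> b' < 5 \<Longrightarrow> block_colour a b = block_colour a b' \<longleftrightarrow> b = b'"
  by (auto simp: less_5_iff block_colour_def)

lemma block_colour_col_eq_iff:
  "a < 5 \<Longrightarrow> a' < 5 \<Longrightarrow> b < 5 \<Longrightarrow> block_colour a b = block_colour a' b \<longleftrightarrow> a = a'"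
  by (auto simp: less_5_iff block_colour_def)

lemma card_block_holes: "card block_holes = 8"
  by (simp add: block_holes_def)

lemma block_colour_unique:
  fixes w :: "nat \<Rightarrow> nat \<Rightarrow> nat"
  assumes clue: "\<And>a b. a < 5 \<Longrightarrow> b < 5 \<Longrightarrow> (a, b) \<notin> block_holes \<Longrightarrow> w a b = block_colour a b"
    and range: "\<And>a b. a < 5 \<Longrightarrow> b < 5 \<Longrightarrow> w a b \<in> {1..8}"
    and row: "\<And>a b b'. a < 5 \<Longrightarrow> b < 5 \<Longrightarrow> b' < 5 \<Longrightarrow> b \<noteq> b' \<Longrightarrow> w a b \<noteq> w a b'"
    and col: "\<And>a a' b. a < 5 \<Longrightarrow> a' < 5 \<Longrightarrow> b < 5 \<Longrightarrow> a \<noteq> a' \<Longrightarrow> w a b \<noteq> w a' b"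
    and "a < 5" "b < 5"
  shows "w a b = block_colour a b"
proof -
  have known: "w 0 1 = 2" "w 0 2 = 3" "w 0 3 = 4" "w 0 4 = 5" "w 1 2 = 4" "w 1 3 = 5" "w 1 4 = 3"
    "w 2 0 = 7" "w 2 2 = 5" "w 2 3 = 3" "w 2 4 = 4" "w 3 0 = 8" "w 3 1 = 1" "w 3 4 = 2"
    "w 4 0 = 6" "w 4 1 = 8" "w 4 2 = 7"
    by (simp_all add: clue block_holes_def block_colour_def)
  have cell: "list_all (\<lambda>b'. b' = b \<or> w a b \<noteq> w a b') [0, 1, 2, 3, 4] \<and>
      list_all (\<lambda>a'. a' = a \<or> w a b \<noteq> w a' b) [0, 1, 2, 3, 4] \<and> w a b \<in> {1, 2, 3, 4, 5, 6, 7, 8}"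
    if "a < 5" "b < 5" for a b
    unfolding list_all_iff
  proof (intro conjI ballI)
    show "b' = b \<or> w a b \<noteq> w a b'" if "b' \<in> set [0, 1, 2, 3, 4]" for b'
      using that row[OF \<open>a < 5\<close> \<open>b < 5\<close>, of b'] by auto
    show "a' = a \<or> w a b \<noteq> w a' b" if "a' \<in> set [0, 1, 2, 3, 4]" for a'
      using that col[OF \<open>a < 5\<close> _ \<open>b < 5\<close>, of a'] by auto
    show "w a b \<in> {1, 2, 3, 4, 5, 6, 7, 8}" using range[OF that] by (auto simp: le_Suc_eq numeral_eq_Suc)
  qed
  \<comment> \<open>each hole is forced by its row and column, in this order\<close>
  have "w 0 0 = 1" using cell[of 0 0] known by auto
  moreover have "w 1 0 = 2" using cell[of 1 0] known \<open>w 0 0 = 1\<close> by auto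
  moreover have "w 2 1 = 6" using cell[of 2 1] known by auto
  moreover have "w 1 1 = 7" using cell[of 1 1] known \<open>w 1 0 = 2\<close> \<open>w 2 1 = 6\<close> by auto
  moreover have "w 4 4 = 1" using cell[of 4 4] known by auto
  moreover have "w 4 3 = 2" using cell[of 4 3] known \<open>w 4 4 = 1\<close> by auto
  moreover have "w 3 2 = 6" using cell[of 3 2] known by auto
  moreover have "w 3 3 = 7" using cell[of 3 3] known \<open>w 4 3 = 2\<close> \<open>w 3 2 = 6\<close> by auto
  ultimately show ?thesis
    using known \<open>a < 5\<close> \<open>b < 5\<close> by (auto simp: less_5_iff block_colour_def)
qed

lemma mod_add_left_cancel:
  fixes a b b' q :: nat
  assumes "(a + b) mod q = (a + b') mod q" "b < q" "b' < q"
  shows "b = b'"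
proof -
  have "[a + b = a + b'] (mod q)" using assms(1) by (simp add: cong_def)
  then have "[b = b'] (mod q)" by (simp add: cong_add_lcancel_nat)
  then show ?thesis using assms(2,3) by (rule cong_less_modulus_unique_nat)
qed

text \<open>The classical 1-factorisation of K(m) for even m: with q = m - 1, the edge between I, J < q
  gets colour (I + J) mod q, and the edge between I and the extra vertex q gets colour 2 I mod q.
  Labelling the two orientations of an edge of colour r by 2 r and 2 r + 1 gives arc_label.\<close>

definition round_robin :: "nat \<Rightarrow> nat \<Rightarrow> nat \<Rightarrow> nat" where
  "round_robin m I J =
    (let q = m - 1 in if I = q then 2 * J mod q else if J = q then 2 * I mod q else (I + J) mod q)"

definition arc_label :: "nat \<Rightarrow> nat \<Rightarrow> nat \<Rightarrow> nat" where
  "arc_label m I J = 2 * round_robin m I J + (if I < J then 0 else 1)"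

lemma round_robin_commute: "round_robin m I J = round_robin m J I"
  by (simp add: round_robin_def Let_def add.commute)

lemma round_robin_less: "1 < m \<Longrightarrow> round_robin m I J < m - 1"
  by (simp add: round_robin_def Let_def)

lemma round_robin_inj_on:
  assumes "even m" "I < m"
  shows "inj_on (round_robin m I) ({..<m} - {I})"
proof (rule inj_onI)
  define q where "q = m - 1"
  have "m = Suc q" using assms(2) by (simp add: q_def)
  then have cop: "coprime 2 q" using assms(1) by simp
  fix J J' assume J: "J \<in> {..<m} - {I}" and J': "J' \<in> {..<m} - {I}"
    and eq: "round_robin m I J = round_robin m I J'"
  show "J = J'"
  proof (cases "I = q")
    case True
    then have "J < q" "J' < q" "2 * J mod q = 2 * J' mod q"
      using J J' eq \<open>m = Suc q\<close> by (auto simp: round_robin_def Let_def)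
    then have "[J = J'] (mod q)" using cong_mult_lcancel_nat[OF cop] by (simp add: cong_def)
    then show ?thesis using \<open>J < q\<close> \<open>J' < q\<close> by (rule cong_less_modulus_unique_nat)
  next
    case False
    then have "I < q" using assms \<open>m = Suc q\<close> by simp
    define f where "f x = (if x = q then I else x)" for x
    have rr: "round_robin m I x = (I + f x) mod q" for x
      using False \<open>m = Suc q\<close> by (simp add: round_robin_def Let_def f_def flip: mult_2)
    have "(I + f J) mod q = (I + f J') mod q" using eq by (simp add: rr)
    moreover have "f J < q" "f J' < q" using J J' \<open>I < q\<close> \<open>m = Suc q\<close> by (auto simp: f_def)
    ultimately have "f J = f J'" by (rule mod_add_left_cancel)
    then show ?thesis using J J' by (auto simp: f_def split: if_splits)
  qed
qed

lemma round_robin_image: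
  assumes "even m" "I < m"
  shows "round_robin m I ` ({..<m} - {I}) = {..<m - 1}"
proof (rule card_subset_eq)
  have "1 < m" using assms by (cases m) (auto simp: odd_pos)
  then show "round_robin m I ` ({..<m} - {I}) \<subseteq> {..<m - 1}" using round_robin_less by auto
  show "card (round_robin m I ` ({..<m} - {I})) = card {..<m - 1}"
    using card_image[OF round_robin_inj_on[OF assms]] assms by simp
qed simp

lemma arc_label_less: "1 < m \<Longrightarrow> arc_label m I J < 2 * (m - 1)"
  using round_robin_less[of m I J] by (simp add: arc_label_def)

lemma round_robin_eq_arc_label_div_2: "round_robin m I J = arc_label m I J div 2"
  by (simp add: arc_label_def)

lemma arc_label_row_inj:
  assumes "even m" "I < m" "J < m" "J' < m" "J \<noteq> I" "J' \<noteq> I" "arc_label m I J = arc_label m I J'"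
  shows "J = J'"
proof -
  have "round_robin m I J = round_robin m I J'"
    using assms(7) by (simp only: round_robin_eq_arc_label_div_2)
  then show ?thesis using inj_onD[OF round_robin_inj_on[OF assms(1,2)]] assms(3-6) by simp
qed

lemma arc_label_col_inj:
  assumes "even m" "J < m" "I < m" "I' < m" "I \<noteq> J" "I' \<noteq> J" "arc_label m I J = arc_label m I' J"
  shows "I = I'"
proof -
  have "round_robin m I J = round_robin m I' J"
    using assms(7) by (simp only: round_robin_eq_arc_label_div_2)
  then have "round_robin m J I = round_robin m J I'" by (simp add: round_robin_commute)
  then show ?thesis using inj_onD[OF round_robin_inj_on[OF assms(1,2)]] assms(3-6) by simp
qed

lemma arc_label_surj:
  assumes "even m" "I < m" "g < 2 * (m - 1)"
  obtains J where "J < m" "J \<noteq> I" "arc_label m I J = g \<or> arc_label m J I = g"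
proof -
  have "g div 2 \<in> round_robin m I ` ({..<m} - {I})"
    using assms round_robin_image by simp
  then obtain J where "J \<in> {..<m} - {I}" "g div 2 = round_robin m I J" by (rule imageE)
  then have J: "J < m" "J \<noteq> I" "round_robin m I J = g div 2" by auto
  have "{arc_label m I J, arc_label m J I} = {2 * (g div 2), 2 * (g div 2) + 1}"
    using J(2,3) by (cases "I < J") (auto simp: arc_label_def round_robin_commute[of m J I])
  then have "arc_label m I J = g \<or> arc_label m J I = g"
    by (metis doubleton_eq_iff odd_two_times_div_two_succ even_two_times_div_two)
  then show thesis using that J by blast
qed

definition square_colour :: "nat \<Rightarrow> nat \<Rightarrow> nat \<Rightarrow> nat" where
  "square_colour m x y =
    (if x div 5 = y div 5 then block_colour (x mod 5) (y mod 5)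
     else 9 + 5 * arc_label m (x div 5) (y div 5) + (x mod 5 + y mod 5) mod 5)"

definition square :: "nat \<Rightarrow> nat \<times> nat \<rightharpoonup> nat" where
  "square m = (\<lambda>(x, y). if x < 5 * m \<and> y < 5 * m then Some (square_colour m x y) else None)"

definition holes :: "nat \<Rightarrow> (nat \<times> nat) set" where
  "holes m = {(x, y). x < 5 * m \<and> y < 5 * m \<and> x div 5 = y div 5 \<and> (x mod 5, y mod 5) \<in> block_holes}"

definition clue :: "nat \<Rightarrow> nat \<times> nat \<rightharpoonup> nat" where
  "clue m = square m |` (- holes m)"

lemma block_cell:
  "I < m \<Longrightarrow> (a::nat) < 5 \<Longrightarrow> 5 * I + a < 5 * m \<and> (5 * I + a) div 5 = I \<and> (5 * I + a) mod 5 = a"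
  by auto

lemma off_diagonal_colour_eq_iff:
  "s < 5 \<Longrightarrow> s' < 5 \<Longrightarrow> (9 + 5 * g + s :: nat) = 9 + 5 * g' + s' \<longleftrightarrow> g = g' \<and> s = s'"
proof
  assume "s < 5" "s' < 5" "9 + 5 * g + s = 9 + 5 * g' + s'"
  then have "(5 * g + s) div 5 = (5 * g' + s') div 5" "(5 * g + s) mod 5 = (5 * g' + s') mod 5" by simp_all
  then show "g = g' \<and> s = s'" using \<open>s < 5\<close> \<open>s' < 5\<close> by simp
qed simp

lemma square_colour_range:
  assumes "m = 1 \<or> even m" "x < 5 * m" "y < 5 * m"
  shows "square_colour m x y \<in> {1..2 * (5 * m) - 2}"
proof (cases "x div 5 = y div 5")
  case True
  have "0 < m" using assms(2) by (cases m) auto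
  then have "8 \<le> 2 * (5 * m) - 2" by linarith
  then show ?thesis using True block_colour_range[of "x mod 5" "y mod 5"] by (auto simp: square_colour_def)
next
  case False
  then have "1 < m" using assms(2,3) by (auto simp: less_mult_imp_div_less)
  moreover have "arc_label m (x div 5) (y div 5) < 2 * (m - 1)" using \<open>1 < m\<close> by (rule arc_label_less)
  moreover have "(x mod 5 + y mod 5) mod 5 < 5" by simp
  ultimately show ?thesis using False unfolding square_colour_def by (simp, linarith)
qed

lemma square_colour_row_distinct:
  assumes m: "m = 1 \<or> even m" and "x < 5 * m" "y < 5 * m" "y' < 5 * m" "y \<noteq> y'"
  shows "square_colour m x y \<noteq> square_colour m x y'"
proof -
  have less: "x div 5 < m" "y div 5 < m" "y' div 5 < m" using assms(2-4) by auto
  consider (same) "y div 5 = y' div 5"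
    | (diagonal) "x div 5 = y div 5 \<or> x div 5 = y' div 5" "y div 5 \<noteq> y' div 5"
    | (off) "x div 5 \<noteq> y div 5" "x div 5 \<noteq> y' div 5" "y div 5 \<noteq> y' div 5"
    by blast
  then show ?thesis
  proof cases
    case same
    then have "y mod 5 \<noteq> y' mod 5" using assms(5) by (metis div_mult_mod_eq)
    then show ?thesis
      using same block_colour_row_eq_iff[of "x mod 5" "y mod 5" "y' mod 5"]
        mod_add_left_cancel[of "x mod 5" "y mod 5" 5 "y' mod 5"]
      by (auto simp: square_colour_def)
  next
    case diagonal
    then show ?thesis
      using block_colour_range[of "x mod 5" "y mod 5"] block_colour_range[of "x mod 5" "y' mod 5"]
      by (auto simp: square_colour_def)
  next
    case off
    then have "even m" using m less by auto
    then have "arc_label m (x div 5) (y div 5) \<noteq> arc_label m (x div 5) (y' div 5)"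
      using arc_label_row_inj[OF \<open>even m\<close> less] off by auto
    then show ?thesis using off by (simp add: square_colour_def off_diagonal_colour_eq_iff)
  qed
qed

lemma square_colour_col_distinct:
  assumes m: "m = 1 \<or> even m" and "x < 5 * m" "x' < 5 * m" "y < 5 * m" "x \<noteq> x'"
  shows "square_colour m x y \<noteq> square_colour m x' y"
proof -
  have less: "x div 5 < m" "x' div 5 < m" "y div 5 < m" using assms(2-4) by auto
  consider (same) "x div 5 = x' div 5"
    | (diagonal) "x div 5 = y div 5 \<or> x' div 5 = y div 5" "x div 5 \<noteq> x' div 5"
    | (off) "x div 5 \<noteq> y div 5" "x' div 5 \<noteq> y div 5" "x div 5 \<noteq> x' div 5"
    by blast
  then show ?thesis
  proof cases
    case same
    then have "x mod 5 \<noteq> x' mod 5" using assms(5) by (metis div_mult_mod_eq)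
    then show ?thesis
      using same block_colour_col_eq_iff[of "x mod 5" "x' mod 5" "y mod 5"]
        mod_add_left_cancel[of "y mod 5" "x mod 5" 5 "x' mod 5"]
      by (auto simp: square_colour_def add.commute)
  next
    case diagonal
    then show ?thesis
      using block_colour_range[of "x mod 5" "y mod 5"] block_colour_range[of "x' mod 5" "y mod 5"]
      by (auto simp: square_colour_def)
  next
    case off
    then have "even m" using m less by auto
    then have "arc_label m (x div 5) (y div 5) \<noteq> arc_label m (x' div 5) (y div 5)"
      using arc_label_col_inj[OF \<open>even m\<close> less(3) less(1) less(2)] off by auto
    then show ?thesis using off by (simp add: square_colour_def off_diagonal_colour_eq_iff)
  qed
qed

lemma square_in_Lset:
  assumes "m = 1 \<or> even m"
  shows "square m \<in> Lset (5 * m) (2 * (5 * m) - 2)"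
proof (rule LsetI)
  show "\<exists>v \<in> {1..2 * (5 * m) - 2}. square m (x, y) = Some v" if "x < 5 * m" "y < 5 * m" for x y
    using square_colour_range[OF assms that] that by (simp add: square_def)
  show "square m z = None" if "z \<notin> cells (5 * m)" for z
    using that by (cases z) (auto simp: square_def cells_def)
qed (use square_colour_row_distinct[OF assms] square_colour_col_distinct[OF assms] in \<open>simp_all add: square_def\<close>)

lemma mod_add_complement: "(a::nat) < 5 \<Longrightarrow> s < 5 \<Longrightarrow> (a + (s + 5 - a) mod 5) mod 5 = s"
proof -
  assume "a < 5" "s < 5"
  then have "a + (s + 5 - a) = s + 5" by simp
  then show ?thesis using \<open>s < 5\<close> by (metis mod_add_right_eq mod_add_self2 mod_less)
qed

context
  fixes m :: nat and c' :: "nat \<times> nat \<rightharpoonup> nat"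
  assumes factorizable: "m = 1 \<or> even m"
    and completion: "c' \<in> Lset (5 * m) (2 * (5 * m) - 2)"
    and extends_clue: "clue m \<subseteq>\<^sub>m c'"
begin

lemma completion_off_holes:
  assumes "x < 5 * m" "y < 5 * m" "(x, y) \<notin> holes m"
  shows "c' (x, y) = Some (square_colour m x y)"
proof -
  have "clue m (x, y) = Some (square_colour m x y)" using assms by (simp add: clue_def square_def)
  then show ?thesis using extends_clue by (metis domI map_le_def)
qed

lemma completion_diagonal_block_le_8:
  assumes I: "I < m" and ab: "a < 5" "b < 5"
  shows "the (c' (5 * I + a, 5 * I + b)) \<le> 8"
proof (rule ccontr)
  define t where "t = the (c' (5 * I + a, 5 * I + b))"
  assume "\<not> ?thesis"
  then have "9 \<le> t" by (simp add: t_def)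
  have cell: "c' (5 * I + a, 5 * I + b) = Some t" "t \<le> 2 * (5 * m) - 2"
    using Lset_value[OF completion, of "5 * I + a" "5 * I + b"] block_cell[OF I ab(1)] block_cell[OF I ab(2)]
    by (auto simp: t_def)
  then have "1 < m" using \<open>9 \<le> t\<close> by linarith
  then have "even m" using factorizable by auto
  define g s where "g = (t - 9) div 5" and "s = (t - 9) mod 5"
  have t: "t = 9 + 5 * g + s" and "s < 5" using \<open>9 \<le> t\<close> by (simp_all add: g_def s_def)
  have "g < 2 * (m - 1)" using cell(2) t \<open>1 < m\<close> by linarith
  \<comment> \<open>colour t already occurs in an off-diagonal block of row 5 I + a or of column 5 I + b\<close>
  then obtain J where J: "J < m" "J \<noteq> I" "arc_label m I J = g \<or> arc_label m J I = g"
    using arc_label_surj[OF \<open>even m\<close> I] by blast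
  then consider "arc_label m I J = g" | "arc_label m J I = g" by blast
  then show False
  proof cases
    case 1
    define b' where "b' = (s + 5 - a) mod 5"
    have "b' < 5" by (simp add: b'_def)
    have "(5 * I + a, 5 * J + b') \<notin> holes m"
      using block_cell[OF I ab(1)] block_cell[OF J(1) \<open>b' < 5\<close>] J(2) by (simp add: holes_def)
    then have "c' (5 * I + a, 5 * J + b') = Some t"
      using completion_off_holes block_cell[OF I ab(1)] block_cell[OF J(1) \<open>b' < 5\<close>] J(2) 1 t
        mod_add_complement[OF ab(1) \<open>s < 5\<close>]
      by (simp add: square_colour_def b'_def)
    moreover have "5 * I + b \<noteq> 5 * J + b'"
      using block_cell[OF I ab(2)] block_cell[OF J(1) \<open>b' < 5\<close>] J(2) by metis
    ultimately show False
      using Lset_row_distinct[OF completion] block_cell[OF I] block_cell[OF J(1) \<open>b' < 5\<close>] ab cell(1) by metis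
  next
    case 2
    define a' where "a' = (s + 5 - b) mod 5"
    have "a' < 5" by (simp add: a'_def)
    have "(5 * J + a', 5 * I + b) \<notin> holes m"
      using block_cell[OF I ab(2)] block_cell[OF J(1) \<open>a' < 5\<close>] J(2) by (simp add: holes_def)
    then have "c' (5 * J + a', 5 * I + b) = Some t"
      using completion_off_holes block_cell[OF I ab(2)] block_cell[OF J(1) \<open>a' < 5\<close>] J(2) 2 t
        mod_add_complement[OF ab(2) \<open>s < 5\<close>]
      by (simp add: square_colour_def a'_def add.commute)
    moreover have "5 * I + a \<noteq> 5 * J + a'"
      using block_cell[OF I ab(1)] block_cell[OF J(1) \<open>a' < 5\<close>] J(2) by metis
    ultimately show False
      using Lset_col_distinct[OF completion] block_cell[OF I] block_cell[OF J(1) \<open>a' < 5\<close>] ab cell(1) by metis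
  qed
qed

lemma completion_diagonal_block:
  assumes I: "I < m" and "a < 5" "b < 5"
  shows "c' (5 * I + a, 5 * I + b) = Some (block_colour a b)"
proof -
  define w where "w a b = the (c' (5 * I + a, 5 * I + b))" for a b
  have cell: "c' (5 * I + a, 5 * I + b) = Some (w a b) \<and> 1 \<le> w a b" if "a < 5" "b < 5" for a b
    using Lset_value[OF completion, of "5 * I + a" "5 * I + b"] block_cell[OF I that(1)] block_cell[OF I that(2)]
    by (auto simp: w_def)
  have "w a b = block_colour a b"
  proof (rule block_colour_unique)
    show "w a b = block_colour a b" if "a < 5" "b < 5" "(a, b) \<notin> block_holes" for a b
      using completion_off_holes[of "5 * I + a" "5 * I + b"] cell[OF that(1,2)] block_cell[OF I that(1)]
        block_cell[OF I that(2)] that(3)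
      by (simp add: holes_def square_colour_def)
    show "w a b \<in> {1..8}" if "a < 5" "b < 5" for a b
      using cell[OF that] completion_diagonal_block_le_8[OF I that] by (simp add: w_def)
    show "w a b \<noteq> w a b'" if "a < 5" "b < 5" "b' < 5" "b \<noteq> b'" for a b b'
      using Lset_row_distinct[OF completion, of "5 * I + a" "5 * I + b" "5 * I + b'"] cell that
        block_cell[OF I] by simp
    show "w a b \<noteq> w a' b" if "a < 5" "a' < 5" "b < 5" "a \<noteq> a'" for a a' b
      using Lset_col_distinct[OF completion, of "5 * I + a" "5 * I + a'" "5 * I + b"] cell that
        block_cell[OF I] by simp
  qed fact+
  then show ?thesis using cell \<open>a < 5\<close> \<open>b < 5\<close> by simp
qed

lemma completion_eq_square: "c' = square m"
proof
  fix z :: "nat \<times> nat"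
  obtain x y where z: "z = (x, y)" by (cases z)
  show "c' z = square m z"
  proof (cases "x < 5 * m \<and> y < 5 * m")
    case False
    then show ?thesis using Lset_None[OF completion] by (auto simp: z cells_def square_def)
  next
    case True
    show ?thesis
    proof (cases "(x, y) \<in> holes m")
      case hole: True
      then have "y div 5 = x div 5" by (simp add: holes_def)
      then have "5 * (x div 5) + x mod 5 = x" "5 * (x div 5) + y mod 5 = y"
        using mult_div_mod_eq[of 5 x] mult_div_mod_eq[of 5 y] by simp_all
      moreover have "x div 5 < m" using True by auto
      ultimately have "c' (x, y) = Some (block_colour (x mod 5) (y mod 5))"
        using completion_diagonal_block[of "x div 5" "x mod 5" "y mod 5"] by simp
      then show ?thesis using True hole by (simp add: z square_def square_colour_def holes_def)
    next
      case False
      then show ?thesis using completion_off_holes True by (simp add: z square_def)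
    qed
  qed
qed

end

lemma holes_eq_image: "holes m = (\<lambda>(I, a, b). (5 * I + a, 5 * I + b)) ` ({..<m} \<times> block_holes)"
proof
  show "holes m \<subseteq> (\<lambda>(I, a, b). (5 * I + a, 5 * I + b)) ` ({..<m} \<times> block_holes)"
  proof
    fix z assume "z \<in> holes m"
    then obtain x y where z: "z = (x, y)" "x < 5 * m" "y div 5 = x div 5" "(x mod 5, y mod 5) \<in> block_holes"
      by (cases z) (auto simp: holes_def)
    have "5 * (x div 5) + x mod 5 = x" "5 * (x div 5) + y mod 5 = y"
      using mult_div_mod_eq[of 5 x] mult_div_mod_eq[of 5 y] z(3) by simp_all
    moreover have "x div 5 < m" using z(2) by auto
    ultimately show "z \<in> (\<lambda>(I, a, b). (5 * I + a, 5 * I + b)) ` ({..<m} \<times> block_holes)"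
      using z(1,4) by (intro image_eqI[where x = "(x div 5, x mod 5, y mod 5)"]) simp_all
  qed
  show "(\<lambda>(I, a, b). (5 * I + a, 5 * I + b)) ` ({..<m} \<times> block_holes) \<subseteq> holes m"
  proof (clarify)
    fix I a b assume "I < m" "(a, b) \<in> block_holes"
    moreover from this have "a < 5" "b < 5" by (auto simp: block_holes_def)
    ultimately show "(5 * I + a, 5 * I + b) \<in> holes m" using block_cell by (simp add: holes_def)
  qed
qed

lemma card_holes: "card (holes m) = 8 * m"
proof -
  have "inj_on (\<lambda>(I, a, b). (5 * I + a, 5 * I + b)) ({..<m} \<times> block_holes)"
  proof (rule inj_onI)
    fix p q assume p: "p \<in> {..<m} \<times> block_holes" and q: "q \<in> {..<m} \<times> block_holes"
      and eq: "(\<lambda>(I, a, b). (5 * I + a, 5 * I + b)) p = (\<lambda>(I, a, b). (5 * I + a, 5 * I + b)) q"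
    obtain I a b I' a' b' where pq: "p = (I, a, b)" "q = (I', a', b')" by (cases p, cases q) auto
    then have "a < 5" "b < 5" "a' < 5" "b' < 5" using p q by (auto simp: block_holes_def)
    moreover have "(5 * I + a) div 5 = (5 * I' + a') div 5" "(5 * I + a) mod 5 = (5 * I' + a') mod 5"
      "(5 * I + b) mod 5 = (5 * I' + b') mod 5"
      using eq pq by simp_all
    ultimately have "I = I'" "a = a'" "b = b'" by simp_all
    then show "p = q" using pq by simp
  qed
  then show ?thesis
    by (simp add: holes_eq_image card_image card_cartesian_product card_block_holes)
qed

lemma dom_clue: "dom (clue m) = cells (5 * m) - holes m"
  by (auto simp: clue_def square_def cells_def split: if_splits)

lemma card_dom_clue: "card (dom (clue m)) = (5 * m) * (5 * m) - 8 * m"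
proof -
  have sub: "holes m \<subseteq> cells (5 * m)" by (auto simp: holes_def cells_def)
  moreover have "finite (cells (5 * m))" by (simp add: cells_def)
  ultimately have "card (cells (5 * m) - holes m) = card (cells (5 * m)) - card (holes m)"
    by (meson card_Diff_subset finite_subset)
  then show ?thesis by (simp add: dom_clue card_cells card_holes)
qed

lemma clue_partial_coloring:
  assumes "m = 1 \<or> even m"
  shows "partial_coloring (5 * m) (2 * (5 * m) - 2) (clue m)"
  unfolding partial_coloring_def
proof
  show "dom (clue m) \<subseteq> cells (5 * m)" by (auto simp: dom_clue)
  show "ran (clue m) \<subseteq> {1..2 * (5 * m) - 2}"
  proof
    fix v assume "v \<in> ran (clue m)"
    then obtain x y where "clue m (x, y) = Some v" by (auto simp: ran_def)
    then have "x < 5 * m" "y < 5 * m" "v = square_colour m x y"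
      by (auto simp: clue_def square_def restrict_map_def split: if_splits)
    then show "v \<in> {1..2 * (5 * m) - 2}" using square_colour_range[OF assms] by simp
  qed
qed

lemma clue_uniquely_extends:
  assumes "m = 1 \<or> even m"
  shows "uniquely_extends (5 * m) (2 * (5 * m) - 2) (clue m)"
  unfolding uniquely_extends_def
proof (rule ex1I)
  show "square m \<in> Lset (5 * m) (2 * (5 * m) - 2) \<and> clue m \<subseteq>\<^sub>m square m"
    using square_in_Lset[OF assms] by (simp add: clue_def map_le_def)
  show "c' = square m" if "c' \<in> Lset (5 * m) (2 * (5 * m) - 2) \<and> clue m \<subseteq>\<^sub>m c'" for c'
    using completion_eq_square[OF assms] that by blast
qed

section \<open>The defining number\<close>

lemma defining_set_card_bound:
  assumes "partial_coloring n (2 * n - 2) p" "uniquely_extends n (2 * n - 2) p"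
  shows "5 * (n * n - card (dom p)) \<le> 8 * n"
proof -
  obtain c where c: "c \<in> Lset n (2 * n - 2)" "p \<subseteq>\<^sub>m c"
    and unique: "\<And>c'. c' \<in> Lset n (2 * n - 2) \<and> p \<subseteq>\<^sub>m c' \<Longrightarrow> c' = c"
    using assms(2) unfolding uniquely_extends_def by blast
  have dom: "dom p \<subseteq> cells n" using assms(1) by (simp add: partial_coloring_def)
  interpret unique_completion_2n_2 n "2 * n - 2" c "cells n - dom p"
  proof
    show "c \<in> Lset n (2 * n - 2)" by (rule c(1))
    show "cells n - dom p \<subseteq> cells n" by blast
    show "c' = c" if "c' \<in> Lset n (2 * n - 2)" "\<And>z. z \<notin> cells n - dom p \<Longrightarrow> c' z = c z" for c'
    proof -
      have "p \<subseteq>\<^sub>m c'" using c(2) dom that(2) by (auto simp: map_le_def)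
      then show ?thesis using unique that(1) by blast
    qed
  qed simp
  have "card (cells n - dom p) = n * n - card (dom p)"
    using card_Diff_subset[OF finite_subset[OF dom] dom] by (simp add: card_cells cells_def)
  then show ?thesis using five_card_uncoloured_le by simp
qed

lemma defining_number_5m:
  assumes "m = 1 \<or> even m"
  shows "defining_number (5 * m) (2 * (5 * m) - 2) = 5 * m * (5 * m) - 8 * m"
  unfolding defining_number_def
proof (rule Least_equality)
  show "\<exists>p. partial_coloring (5 * m) (2 * (5 * m) - 2) p \<and> uniquely_extends (5 * m) (2 * (5 * m) - 2) p
      \<and> card (dom p) = 5 * m * (5 * m) - 8 * m"
    using clue_partial_coloring[OF assms] clue_uniquely_extends[OF assms] card_dom_clue[of m] by blast
  show "5 * m * (5 * m) - 8 * m \<le> k"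
    if "\<exists>p. partial_coloring (5 * m) (2 * (5 * m) - 2) p \<and> uniquely_extends (5 * m) (2 * (5 * m) - 2) p
      \<and> card (dom p) = k" for k
    using that defining_set_card_bound[of "5 * m"] by fastforce
qed

theorem mainTheorem3:
  fixes n :: nat
  assumes "n > 0" and "n = 5 \<or> 10 dvd n"
  shows "real (defining_number n (2*n - 2)) = real n ^ 2 - 8 * real n / 5"
proof -
  obtain m where n: "n = 5 * m" and m: "m = 1 \<or> even m"
  proof (cases "n = 5")
    case False
    then have "10 dvd n" using assms(2) by simp
    then obtain k where "n = 10 * k" by (rule dvdE)
    then show thesis using that[of "2 * k"] by simp
  qed simp
  have "8 * m \<le> 5 * m * (5 * m)" using le_square[of m] by simp
  then show ?thesis using defining_number_5m[OF m] by (simp add: n of_nat_diff power2_eq_square)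
qed

end
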